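(* Let $X$ be a transitive BE-algebra, $k\in(-0.5,0]$, and $(X,f)$ an $([e],[e]\vee[c_k])$-ideal of $X$. For $t\in[-1,0)$ let $Q(f;t)=\{x\in X: f(x)+t+k+1<0\}$. Then for every $t\in[-1,\tfrac{-k-1}{2})$, the set $Q(f;t)$ is either empty or an ideal of $X$.
   Context: A BE-algebra is a set $X$ with a binary operation $*$ and a distinguished element $1$ such that for all $x,y,z\in X$: $x*x=1$, $x*1=1$, $1*x=x$, and $x*(y*z)=y*(x*z)$. Write $x\le y$ iff $x*y=1$. A BE-algebra is transitive if $y*z\le(x*y)*(x*z)$ for all $x,y,z\in X$. An ideal of $X$ is a nonempty subset $I\subseteq X$ such that $x*s\in I$ for all $x\in X$, $s\in I$, and $(s*(q*x))*x\in I$ for all $x\in X$ and $s,q\in I$. An $N$-structure on $X$ is a pair $(X,f)$ where $f:X\to[-1,0]$ is any function. Fix $k\in(-1,0]$. For $x\in X$ and $t\in[-1,0)$, write $\frac{x}{t}[e]f$ if $f(x)\le t$, and $\frac{x}{t}[c_k]f$ if $f(x)+t+k+1<0$; write $\frac{x}{t}([e]\vee[c_k])f$ if at least one of these holds. The $N$-structure $(X,f)$ is an $([e],[e]\vee[c_k])$-ideal of $X$ if for all $x,y,z\in X$ and all $t,r\in[-1,0)$: (i) $f(y)\le t$ implies $\frac{x*y}{t}([e]\vee[c_k])f$; (ii) $f(x)\le t$ and $f(y)\le r$ together imply $\frac{(x*(y*z))*z}{\max\{t,r\}}([e]\vee[c_k])f$. *)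

theory Defs
  imports Complex_Main
begin

definition BE_algebra :: "'a set \<Rightarrow> ('a \<Rightarrow> 'a \<Rightarrow> 'a) \<Rightarrow> 'a \<Rightarrow> bool" where
  "BE_algebra X m one \<longleftrightarrow>
     one \<in> X \<and> (\<forall>x\<in>X. \<forall>y\<in>X. m x y \<in> X) \<and>
     (\<forall>x\<in>X. m x x = one) \<and> (\<forall>x\<in>X. m x one = one) \<and> (\<forall>x\<in>X. m one x = x) \<and>
     (\<forall>x\<in>X. \<forall>y\<in>X. \<forall>z\<in>X. m x (m y z) = m y (m x z))"

definition BE_le :: "('a \<Rightarrow> 'a \<Rightarrow> 'a) \<Rightarrow> 'a \<Rightarrow> 'a \<Rightarrow> 'a \<Rightarrow> bool" where
  "BE_le m one x y \<longleftrightarrow> m x y = one"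

definition transitive_BE :: "'a set \<Rightarrow> ('a \<Rightarrow> 'a \<Rightarrow> 'a) \<Rightarrow> 'a \<Rightarrow> bool" where
  "transitive_BE X m one \<longleftrightarrow> BE_algebra X m one \<and>
     (\<forall>x\<in>X. \<forall>y\<in>X. \<forall>z\<in>X. BE_le m one (m y z) (m (m x y) (m x z)))"

definition BE_ideal :: "'a set \<Rightarrow> ('a \<Rightarrow> 'a \<Rightarrow> 'a) \<Rightarrow> 'a set \<Rightarrow> bool" where
  "BE_ideal X m I \<longleftrightarrow> I \<noteq> {} \<and> I \<subseteq> X \<and>
     (\<forall>x\<in>X. \<forall>s\<in>I. m x s \<in> I) \<and>
     (\<forall>x\<in>X. \<forall>s\<in>I. \<forall>q\<in>I. m (m s (m q x)) x \<in> I)"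

definition N_structure :: "'a set \<Rightarrow> ('a \<Rightarrow> real) \<Rightarrow> bool" where
  "N_structure X f \<longleftrightarrow> (\<forall>x\<in>X. -1 \<le> f x \<and> f x \<le> 0)"

definition N_e :: "('a \<Rightarrow> real) \<Rightarrow> 'a \<Rightarrow> real \<Rightarrow> bool" where
  "N_e f x t \<longleftrightarrow> f x \<le> t"

definition N_ck :: "real \<Rightarrow> ('a \<Rightarrow> real) \<Rightarrow> 'a \<Rightarrow> real \<Rightarrow> bool" where
  "N_ck k f x t \<longleftrightarrow> f x + t + k + 1 < 0"

definition N_e_or_ck :: "real \<Rightarrow> ('a \<Rightarrow> real) \<Rightarrow> 'a \<Rightarrow> real \<Rightarrow> bool" where
  "N_e_or_ck k f x t \<longleftrightarrow> N_e f x t \<or> N_ck k f x t"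

definition e_eck_ideal :: "'a set \<Rightarrow> ('a \<Rightarrow> 'a \<Rightarrow> 'a) \<Rightarrow> real \<Rightarrow> ('a \<Rightarrow> real) \<Rightarrow> bool" where
  "e_eck_ideal X m k f \<longleftrightarrow> N_structure X f \<and>
     (\<forall>x\<in>X. \<forall>y\<in>X. \<forall>t\<in>{-1..<0}. f y \<le> t \<longrightarrow> N_e_or_ck k f (m x y) t) \<and>
     (\<forall>x\<in>X. \<forall>y\<in>X. \<forall>z\<in>X. \<forall>t\<in>{-1..<0}. \<forall>r\<in>{-1..<0}.
        f x \<le> t \<and> f y \<le> r \<longrightarrow> N_e_or_ck k f (m (m x (m y z)) z) (max t r))"

definition Qset :: "'a set \<Rightarrow> real \<Rightarrow> ('a \<Rightarrow> real) \<Rightarrow> real \<Rightarrow> 'a set" where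
  "Qset X k f t = {x\<in>X. f x + t + k + 1 < 0}"

end

theory Submission
  imports Defs
begin

text \<open>Write \<open>u = -t - k - 1\<close>, so that \<open>Q(f;t) = {x. f x < u}\<close>, and note \<open>t < u\<close> because
  \<open>t < (-k - 1)/2\<close>. If \<open>u > 0\<close> then \<open>Q(f;t)\<close> is all of \<open>X\<close>. Otherwise, for \<open>s \<in> Q(f;t)\<close> the level
  \<open>\<tau> = max (f s) t\<close> lies in \<open>[t, u) \<subseteq> [-1, 0)\<close>, and at any such level both alternatives of
  \<open>[e] \<or> [c_k]\<close> force membership in \<open>Q(f;t)\<close>: \<open>f z \<le> \<tau> < u\<close>, or \<open>f z < -\<tau> - k - 1 \<le> u\<close>.
  Applying the two ideal conditions of \<open>f\<close> at such levels gives the two closure conditions.\<close>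

lemma Qset_iff: "x \<in> Qset X k f t \<longleftrightarrow> x \<in> X \<and> f x < -t - k - 1"
  unfolding Qset_def by auto

lemma Qset_eq_carrier:
  assumes "N_structure X f" and "t + k + 1 < 0"
  shows "Qset X k f t = X"
  using assms unfolding Qset_def N_structure_def by force

lemma BE_ideal_carrier:
  assumes "BE_algebra X m one"
  shows "BE_ideal X m X"
  using assms unfolding BE_algebra_def BE_ideal_def by auto

lemma N_e_or_ck_imp_in_Qset:
  assumes "z \<in> X" and "t \<le> \<tau>" and "\<tau> < -t - k - 1" and "N_e_or_ck k f z \<tau>"
  shows "z \<in> Qset X k f t"
  using assms unfolding Qset_iff N_e_or_ck_def N_e_def N_ck_def by auto

lemma Qset_level:
  assumes "s \<in> Qset X k f t" and "-1 \<le> t" and "2 * t + k + 1 < 0" and "0 \<le> t + k + 1"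
  shows "max (f s) t \<in> {-1..<0}" and "t \<le> max (f s) t" and "max (f s) t < -t - k - 1"
  using assms unfolding Qset_iff by auto

lemma e_eck_idealD1:
  assumes "e_eck_ideal X m k f" and "x \<in> X" "y \<in> X" and "\<tau> \<in> {-1..<0}" "f y \<le> \<tau>"
  shows "N_e_or_ck k f (m x y) \<tau>"
  using assms unfolding e_eck_ideal_def by blast

lemma e_eck_idealD2:
  assumes "e_eck_ideal X m k f" and "x \<in> X" "y \<in> X" "z \<in> X"
    and "\<tau> \<in> {-1..<0}" "\<rho> \<in> {-1..<0}" "f x \<le> \<tau>" "f y \<le> \<rho>"
  shows "N_e_or_ck k f (m (m x (m y z)) z) (max \<tau> \<rho>)"
  using assms unfolding e_eck_ideal_def by blast

lemma Qset_BE_ideal: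
  assumes closed: "\<forall>x\<in>X. \<forall>y\<in>X. m x y \<in> X"
    and f: "e_eck_ideal X m k f"
    and t: "-1 \<le> t" "2 * t + k + 1 < 0" "0 \<le> t + k + 1"
    and nonempty: "Qset X k f t \<noteq> {}"
  shows "BE_ideal X m (Qset X k f t)"
proof -
  let ?Q = "Qset X k f t"
  have left: "m x s \<in> ?Q" if x: "x \<in> X" and s: "s \<in> ?Q" for x s
  proof (rule N_e_or_ck_imp_in_Qset)
    have sX: "s \<in> X" using s unfolding Qset_iff by blast
    show "m x s \<in> X" using closed x sX by blast
    show "N_e_or_ck k f (m x s) (max (f s) t)"
      using e_eck_idealD1[OF f x sX Qset_level(1)[OF s t]] by simp
  qed (use Qset_level[OF s t] in auto)
  have right: "m (m s (m q x)) x \<in> ?Q" if x: "x \<in> X" and s: "s \<in> ?Q" and q: "q \<in> ?Q"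
    for x s q
  proof (rule N_e_or_ck_imp_in_Qset)
    have sX: "s \<in> X" and qX: "q \<in> X" using s q unfolding Qset_iff by blast+
    show "m (m s (m q x)) x \<in> X" using closed x sX qX by blast
    show "N_e_or_ck k f (m (m s (m q x)) x) (max (max (f s) t) (max (f q) t))"
      using e_eck_idealD2[OF f sX qX x Qset_level(1)[OF s t] Qset_level(1)[OF q t]] by simp
  qed (use Qset_level[OF s t] Qset_level[OF q t] in auto)
  have "?Q \<subseteq> X" unfolding Qset_def by blast
  then show ?thesis
    using nonempty left right unfolding BE_ideal_def by blast
qed

theorem mainTheorem11:
  fixes X :: "'a set" and m :: "'a \<Rightarrow> 'a \<Rightarrow> 'a" and one :: 'a
    and f :: "'a \<Rightarrow> real" and k t :: real
  assumes "transitive_BE X m one"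
    and "-1/2 < k" and "k \<le> 0"
    and "e_eck_ideal X m k f"
    and "-1 \<le> t" and "t < (-k - 1) / 2"
  shows "Qset X k f t = {} \<or> BE_ideal X m (Qset X k f t)"
proof -
  have BE: "BE_algebra X m one"
    using assms(1) unfolding transitive_BE_def by blast
  have closed: "\<forall>x\<in>X. \<forall>y\<in>X. m x y \<in> X"
    using BE unfolding BE_algebra_def by blast
  have t: "2 * t + k + 1 < 0"
    using assms(6) by simp
  show ?thesis
  proof (cases "t + k + 1 < 0")
    case True
    have "N_structure X f"
      using assms(4) unfolding e_eck_ideal_def by blast
    then have "Qset X k f t = X"
      using Qset_eq_carrier True by blast
    then show ?thesis
      using BE_ideal_carrier[OF BE] by simp
  next
    case False
    then have "0 \<le> t + k + 1"
      by simp
    then show ?thesis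
      using Qset_BE_ideal[OF closed assms(4) assms(5) t] by blast
  qed
qed

end
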